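(* In the setting of the context, assume $G''(p_1)<0$ and $G''(p_2)<0$, and that $\ell\in(0,\min\{L,1-L\})$ is chosen so that $$\big[(L-\ell)G''(p_1)+(1-L-\ell)G''(p_2)\big]e^{-K_1}+2\ell K_2e^{K_1}<0.$$ Then $I_{\theta_0+c}(1)<0<I_{\theta_0-c}(1)$ for all sufficiently small $c>0$.
   Context: Let $G\in\mathrm{C}^2(\mathbb{R})$ be coercive ($G(p)\to\infty$ as $p\to\pm\infty$), $p_1<p_2$ with $G'(p_1)<0<G'(p_2)$, $L=\frac{G'(p_2)}{G'(p_2)-G'(p_1)}$, $K_1=\max\{|G'(p)|:\,p\in[p_1,p_2]\}$, $K_2=\max\{|G''(p)|:\,p\in[p_1,p_2]\}$. Given $\ell$, let $f$ be a $1$-periodic function in $\mathrm{C}^1(\mathbb{R})$ with $f'$ Lipschitz, $p_1\le f\le p_2$, $f=p_1$ on $[0,L-\ell]$, $f=p_2$ on $[L,1-\ell]$, and $\int_0^1G'(f(x))dx=0$. Define the $1$-periodic Lipschitz potential $V(x)=-f'(x)-G(f(x))$ and $\theta_0=\int_0^1f(x)dx$. For each $\theta\in\mathbb{R}$, $f_\theta\in\mathrm{C}^1(\mathbb{R})$ denotes the unique $1$-periodic function with $\int_0^1f_\theta=\theta$ and $f_\theta'+G(f_\theta)+V=\overline{H}(\theta)$ on $\mathbb{R}$ for some (unique) constant $\overline{H}(\theta)$; and $I_\theta(1)=\int_0^1G'(f_\theta(x))dx$. *)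

theory Defs
  imports "HOL-Analysis.Analysis"
begin

definition periodic1 :: "(real \<Rightarrow> real) \<Rightarrow> bool" where
  "periodic1 g \<longleftrightarrow> (\<forall>x. g (x + 1) = g x)"

definition corrector :: "(real \<Rightarrow> real) \<Rightarrow> (real \<Rightarrow> real) \<Rightarrow> real \<Rightarrow> (real \<Rightarrow> real) \<Rightarrow> bool" where
  "corrector G V \<theta> g \<longleftrightarrow>
     periodic1 g \<and>
     integral {0..1} g = \<theta> \<and>
     (\<exists>g'. (\<forall>x. (g has_real_derivative g' x) (at x)) \<and> continuous_on UNIV g' \<and>
           (\<exists>H. \<forall>x. g' x + G (g x) + V x = H))"

end

theory Submission
  imports Defs
begin

text \<open>
  For \<sigma> = 1 or \<sigma> = -1 and a corrector g of mean \<theta>0 + \<sigma> c, the gap k = \<sigma> (g - f) solves the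
  linear equation k' = s - a k, where s is a constant and a is the secant slope of G between g
  and f. With the integrating factor exp (integral of a from 0 to x) this becomes a monotonicity
  statement, so a periodic k of mean c > 0 is positive and stays within a bounded factor of
  k 0, which is of order c. Coercivity of G confines all correctors with mean near \<theta>0 to one
  compact range of values, hence a = G' o f + O(c); since G' o f has mean zero and is bounded
  by K1, the gap is pinched between k 0 exp (-K1 - O(c)) and k 0 exp (K1 + O(c)).
  Finally \<sigma> times the mean of G' o g equals the mean of \<sigma> (G' o g - G' o f), which is the
  integral of (G'' o f) k up to o(c). On the two flat phases of f the weight G''(p1), G''(p2)
  is negative, on the two transition layers of length ell it is at most K2, and the key
  hypothesis says precisely that the flat phases win.
\<close>

section \<open>Periodic functions\<close>

lemma periodic1_add_int:
  assumes "periodic1 g"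
  shows "g (x + of_int n) = g x"
proof (induction n rule: int_induct[where k = 0])
  case (step1 i)
  then show ?case
    using assms[unfolded periodic1_def, rule_format, of "x + of_int i"] by (simp add: add.assoc)
next
  case (step2 i)
  then show ?case
    using assms[unfolded periodic1_def, rule_format, of "x + of_int i - 1"] by (simp add: add_diff_eq)
qed simp

lemma periodic1_frac: "periodic1 g \<Longrightarrow> g (frac x) = g x"
  using periodic1_add_int[of g "frac x" "\<lfloor>x\<rfloor>"] by (simp add: frac_def)

lemma periodic1_one: "periodic1 g \<Longrightarrow> g 1 = g 0"
  unfolding periodic1_def by (metis add_0)

lemma periodic1_attains_extrema:
  assumes per: "periodic1 g" and g: "\<And>x. (g has_real_derivative g' x) (at x)"
  obtains xmax xmin where "xmax \<in> {0..1}" "xmin \<in> {0..1}" "\<And>y. g xmin \<le> g y \<and> g y \<le> g xmax"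
    "g' xmax = 0" "g' xmin = 0"
proof -
  have gc: "continuous_on {0..1} g"
    using g by (meson DERIV_isCont continuous_at_imp_continuous_on)
  obtain xmax where xmax: "xmax \<in> {0..1}" "\<forall>y\<in>{0..1}. g y \<le> g xmax"
    using continuous_attains_sup[OF compact_Icc _ gc] by auto
  obtain xmin where xmin: "xmin \<in> {0..1}" "\<forall>y\<in>{0..1}. g xmin \<le> g y"
    using continuous_attains_inf[OF compact_Icc _ gc] by auto
  have ext: "g xmin \<le> g y \<and> g y \<le> g xmax" for y
  proof -
    have y: "frac y \<in> {0..1}"
      using frac_lt_1[of y] frac_ge_0[of y] by simp
    show ?thesis
      using xmax(2)[rule_format, OF y] xmin(2)[rule_format, OF y] periodic1_frac[OF per, of y] by simp
  qed
  have "g' xmax = 0"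
    by (rule DERIV_local_max[OF g, of 1]) (use ext in auto)
  moreover have "g' xmin = 0"
    by (rule DERIV_local_min[OF g, of 1]) (use ext in auto)
  ultimately show thesis
    using that xmax(1) xmin(1) ext by blast
qed

lemma continuous_on_abs_bound:
  fixes \<phi> :: "real \<Rightarrow> real"
  assumes "continuous_on {a..b} \<phi>"
  obtains B where "\<And>x. x \<in> {a..b} \<Longrightarrow> \<bar>\<phi> x\<bar> \<le> B"
proof -
  obtain B where "\<forall>y\<in>\<phi> ` {a..b}. \<bar>y\<bar> \<le> B"
    using compact_imp_bounded[OF compact_continuous_image[OF assms compact_Icc]]
    unfolding bounded_real by blast
  then show thesis
    by (intro that) auto
qed

lemma integral_le_const_real:
  fixes f :: "real \<Rightarrow> real"
  assumes "a \<le> b" "f integrable_on {a..b}" "\<And>x. x \<in> {a..b} \<Longrightarrow> f x \<le> B"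
  shows "integral {a..b} f \<le> B * (b - a)"
  using integral_component_ubound_real[of f a b 1 B] assms by simp

lemma integral_ge_const_real:
  fixes f :: "real \<Rightarrow> real"
  assumes "a \<le> b" "f integrable_on {a..b}" "\<And>x. x \<in> {a..b} \<Longrightarrow> B \<le> f x"
  shows "B * (b - a) \<le> integral {a..b} f"
  using integral_component_lbound_real[of f a b B 1] assms by simp

lemma abs_integral_upto_le:
  fixes \<phi> :: "real \<Rightarrow> real"
  assumes "continuous_on {0..1} \<phi>" "\<And>t. t \<in> {0..1} \<Longrightarrow> \<bar>\<phi> t\<bar> \<le> B" "x \<in> {0..1}"
  shows "\<bar>integral {0..x} \<phi>\<bar> \<le> B"
proof -
  have "norm (integral {0..x} \<phi>) \<le> B * (x - 0)"
    by (rule integral_bound) (use assms in \<open>auto intro: continuous_on_subset\<close>)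
  then have "\<bar>integral {0..x} \<phi>\<bar> \<le> B * x"
    by (simp only: real_norm_def diff_0_right)
  also have "\<dots> \<le> B"
  proof (rule mult_left_le)
    show "x \<le> 1" "0 \<le> B"
      using assms(3) abs_ge_zero[of "\<phi> 0"] assms(2)[of 0] by auto
  qed
  finally show ?thesis .
qed

section \<open>Secant slopes\<close>

definition secant_slope :: "(real \<Rightarrow> real) \<Rightarrow> (real \<Rightarrow> real) \<Rightarrow> real \<Rightarrow> real \<Rightarrow> real" where
  "secant_slope G G' u v = (if u = v then G' v else (G u - G v) / (u - v))"

lemma secant_slope_mult: "secant_slope G G' u v * (u - v) = G u - G v"
  by (simp add: secant_slope_def)

lemma secant_slope_mean_value:
  assumes "\<And>x. (G has_real_derivative G' x) (at x)"
  obtains \<xi> where "min u v \<le> \<xi>" "\<xi> \<le> max u v" "secant_slope G G' u v = G' \<xi>"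
proof (cases u v rule: linorder_cases)
  case less
  with MVT2[OF less, of G G'] assms obtain \<xi> where "u < \<xi>" "\<xi> < v" "G v - G u = (v - u) * G' \<xi>"
    by blast
  then show thesis
    using less by (intro that[of \<xi>]) (simp_all add: secant_slope_def field_simps)
next
  case greater
  with MVT2[OF greater, of G G'] assms obtain \<xi> where "v < \<xi>" "\<xi> < u" "G u - G v = (u - v) * G' \<xi>"
    by blast
  then show thesis
    using greater by (intro that[of \<xi>]) (simp_all add: secant_slope_def)
next
  case equal
  then show thesis
    by (intro that[of v]) (simp_all add: secant_slope_def)
qed

lemma isCont_secant_slope:
  assumes G: "\<And>x. (G has_real_derivative G' x) (at x)" and G': "\<And>x. isCont G' x"
    and u: "isCont u x0" and v: "isCont v x0"
  shows "isCont (\<lambda>x. secant_slope G G' (u x) (v x)) x0"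
  unfolding isCont_def tendsto_iff
proof (intro allI impI)
  fix e :: real assume "e > 0"
  show "\<forall>\<^sub>F x in at x0. dist (secant_slope G G' (u x) (v x)) (secant_slope G G' (u x0) (v x0)) < e"
  proof (cases "u x0 = v x0")
    case True
    obtain d where "d > 0" and d: "\<And>q. dist q (v x0) < d \<Longrightarrow> dist (G' q) (G' (v x0)) < e"
      using G'[of "v x0"] \<open>e > 0\<close> unfolding continuous_at_eps_delta by blast
    have "\<forall>\<^sub>F x in at x0. dist (u x) (v x0) < d \<and> dist (v x) (v x0) < d"
      using u v \<open>d > 0\<close> True unfolding isCont_def tendsto_iff by (simp add: eventually_conj)
    then show ?thesis
    proof (rule eventually_mono)
      fix x assume near: "dist (u x) (v x0) < d \<and> dist (v x) (v x0) < d"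
      obtain \<xi> where "min (u x) (v x) \<le> \<xi>" "\<xi> \<le> max (u x) (v x)"
        and \<xi>: "secant_slope G G' (u x) (v x) = G' \<xi>"
        using secant_slope_mean_value[OF G] by blast
      with near have "dist \<xi> (v x0) < d"
        by (auto simp: dist_real_def)
      with d[of \<xi>] \<xi> True show "dist (secant_slope G G' (u x) (v x)) (secant_slope G G' (u x0) (v x0)) < e"
        by (simp add: secant_slope_def)
    qed
  next
    case False
    have slope: "secant_slope G G' (u x) (v x) = (G (u x) - G (v x)) / (u x - v x)"
      if "u x - v x \<noteq> 0" for x
      using that by (simp add: secant_slope_def)
    have Gc: "\<And>x. isCont G x"
      using G DERIV_isCont by blast
    have "isCont (\<lambda>x. (G (u x) - G (v x)) / (u x - v x)) x0"
      using False u v isCont_o2[OF u Gc] isCont_o2[OF v Gc] by (intro continuous_intros) auto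
    then have close: "\<forall>\<^sub>F x in at x0.
        dist ((G (u x) - G (v x)) / (u x - v x)) (secant_slope G G' (u x0) (v x0)) < e"
      using \<open>e > 0\<close> False unfolding isCont_def tendsto_iff secant_slope_def by simp
    have "((\<lambda>x. u x - v x) \<longlongrightarrow> u x0 - v x0) (at x0)"
      using u v unfolding isCont_def by (intro tendsto_diff)
    then have "\<forall>\<^sub>F x in at x0. u x - v x \<noteq> 0"
      by (rule tendsto_imp_eventually_ne) (use False in simp)
    with close show ?thesis
      by eventually_elim (simp add: slope)
  qed
qed

lemma abs_secant_slope_le:
  assumes G: "\<And>x. (G has_real_derivative G' x) (at x)"
    and "u \<in> {a..b}" "v \<in> {a..b}" and bound: "\<And>p. p \<in> {a..b} \<Longrightarrow> \<bar>G' p\<bar> \<le> K"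
  shows "\<bar>secant_slope G G' u v\<bar> \<le> K"
proof -
  obtain \<xi> where "min u v \<le> \<xi>" "\<xi> \<le> max u v" "secant_slope G G' u v = G' \<xi>"
    using secant_slope_mean_value[OF G] .
  moreover from this assms(2,3) have "\<xi> \<in> {a..b}"
    by auto
  ultimately show ?thesis
    using bound by simp
qed

lemma abs_secant_slope_minus_deriv_le:
  assumes G: "\<And>x. (G has_real_derivative G' x) (at x)"
    and G': "\<And>x. (G' has_real_derivative G'' x) (at x)"
    and "u \<in> {a..b}" "v \<in> {a..b}" and bound: "\<And>p. p \<in> {a..b} \<Longrightarrow> \<bar>G'' p\<bar> \<le> K"
  shows "\<bar>secant_slope G G' u v - G' v\<bar> \<le> K * \<bar>u - v\<bar>"
proof -
  obtain \<xi> where \<xi>: "min u v \<le> \<xi>" "\<xi> \<le> max u v" "secant_slope G G' u v = G' \<xi>"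
    using secant_slope_mean_value[OF G] .
  obtain \<zeta> where \<zeta>: "min \<xi> v \<le> \<zeta>" "\<zeta> \<le> max \<xi> v" "secant_slope G' G'' \<xi> v = G'' \<zeta>"
    using secant_slope_mean_value[OF G'] .
  have "\<bar>secant_slope G G' u v - G' v\<bar> = \<bar>G'' \<zeta>\<bar> * \<bar>\<xi> - v\<bar>"
    using \<xi>(3) \<zeta>(3) secant_slope_mult[of G' G'' \<xi> v] by (simp add: abs_mult[symmetric])
  also have "\<dots> \<le> K * \<bar>u - v\<bar>"
  proof (rule mult_mono)
    have "\<zeta> \<in> {a..b}"
      using \<xi>(1,2) \<zeta>(1,2) assms(3,4) by auto
    then show "\<bar>G'' \<zeta>\<bar> \<le> K" "0 \<le> K"
      using bound[of \<zeta>] by auto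
    show "\<bar>\<xi> - v\<bar> \<le> \<bar>u - v\<bar>"
      using \<xi>(1,2) by auto
  qed simp
  finally show ?thesis .
qed

lemma deriv_increment_le:
  assumes G': "\<And>x. (G' has_real_derivative G'' x) (at x)"
    and near: "\<And>p. min u v \<le> p \<Longrightarrow> p \<le> max u v \<Longrightarrow> G'' p \<le> G'' v + \<epsilon>"
    and \<sigma>: "\<sigma> * (u - v) = \<bar>u - v\<bar>"
  shows "\<sigma> * (G' u - G' v) \<le> (G'' v + \<epsilon>) * \<bar>u - v\<bar>"
proof -
  obtain \<zeta> where \<zeta>: "min u v \<le> \<zeta>" "\<zeta> \<le> max u v" "secant_slope G' G'' u v = G'' \<zeta>"
    using secant_slope_mean_value[OF G'] .
  have "G' u - G' v = G'' \<zeta> * (u - v)"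
    using secant_slope_mult[of G' G'' u v] \<zeta>(3) by simp
  then have "\<sigma> * (G' u - G' v) = G'' \<zeta> * (\<sigma> * (u - v))"
    by (metis mult.left_commute)
  also have "\<dots> \<le> (G'' v + \<epsilon>) * \<bar>u - v\<bar>"
    unfolding \<sigma> using near[OF \<zeta>(1,2)] by (rule mult_right_mono) simp
  finally show ?thesis .
qed

section \<open>Periodic solutions of linear first-order equations\<close>

lemma mono_of_deriv_nonneg_within:
  fixes F d :: "real \<Rightarrow> real"
  assumes F: "\<And>x. x \<in> {a..b} \<Longrightarrow> (F has_real_derivative d x) (at x within {a..b})"
    and nonneg: "\<And>x. x \<in> {a..b} \<Longrightarrow> 0 \<le> d x" and "a \<le> u" "u \<le> v" "v \<le> b"
  shows "F u \<le> F v"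
proof -
  have "(d has_integral (F v - F u)) {u..v}"
  proof (rule fundamental_theorem_of_calculus[OF \<open>u \<le> v\<close>])
    fix x assume "x \<in> {u..v}"
    with assms(3-5) have "(F has_real_derivative d x) (at x within {u..v})"
      by (intro DERIV_subset[OF F]) auto
    then show "(F has_vector_derivative d x) (at x within {u..v})"
      by (simp add: has_real_derivative_iff_has_vector_derivative)
  qed
  then have "0 \<le> F v - F u"
    by (rule has_integral_nonneg) (use nonneg assms(3-5) in auto)
  then show ?thesis
    by simp
qed

lemma between_of_deriv_const_sign:
  fixes F w :: "real \<Rightarrow> real"
  assumes F: "\<And>x. x \<in> {a..b} \<Longrightarrow> (F has_real_derivative s * w x) (at x within {a..b})"
    and w: "\<And>x. x \<in> {a..b} \<Longrightarrow> 0 \<le> w x" and x: "x \<in> {a..b}"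
  shows "min (F a) (F b) \<le> F x \<and> F x \<le> max (F a) (F b)"
proof (cases "0 \<le> s")
  case True
  have nonneg: "0 \<le> s * w y" if "y \<in> {a..b}" for y
    using w[OF that] True by simp
  have "F a \<le> F x"
    by (rule mono_of_deriv_nonneg_within[OF F nonneg]) (use x in auto)
  moreover have "F x \<le> F b"
    by (rule mono_of_deriv_nonneg_within[OF F nonneg]) (use x in auto)
  ultimately show ?thesis
    by linarith
next
  case False
  have neg_F: "((\<lambda>x. - F x) has_real_derivative (- s) * w x) (at x within {a..b})"
    if "x \<in> {a..b}" for x
    using F[OF that] by (auto intro: derivative_eq_intros)
  have nonneg: "0 \<le> (- s) * w y" if "y \<in> {a..b}" for y
    using w[OF that] False by (simp add: mult_nonpos_nonneg)
  have "- F a \<le> - F x"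
    by (rule mono_of_deriv_nonneg_within[OF neg_F nonneg]) (use x in auto)
  moreover have "- F x \<le> - F b"
    by (rule mono_of_deriv_nonneg_within[OF neg_F nonneg]) (use x in auto)
  ultimately show ?thesis
    by linarith
qed

lemma integrating_factor_between:
  fixes k a :: "real \<Rightarrow> real"
  assumes a: "continuous_on {0..1} a"
    and k: "\<And>x. x \<in> {0..1} \<Longrightarrow> (k has_real_derivative s - a x * k x) (at x within {0..1})"
    and x: "x \<in> {0..1}"
  shows "min (k 0) (exp (integral {0..1} a) * k 1) \<le> exp (integral {0..x} a) * k x \<and>
    exp (integral {0..x} a) * k x \<le> max (k 0) (exp (integral {0..1} a) * k 1)"
proof -
  define F where "F x = exp (integral {0..x} a) * k x" for x
  have "(F has_real_derivative s * exp (integral {0..x} a)) (at x within {0..1})"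
    if "x \<in> {0..1}" for x
  proof -
    have "(F has_real_derivative exp (integral {0..x} a) * a x * k x
        + exp (integral {0..x} a) * (s - a x * k x)) (at x within {0..1})"
      unfolding F_def using integral_has_real_derivative[OF a that] k[OF that]
      by (intro derivative_eq_intros) auto
    then show ?thesis
      by (rule DERIV_cong) (simp add: algebra_simps)
  qed
  then have "min (F 0) (F 1) \<le> F x \<and> F x \<le> max (F 0) (F 1)"
    by (rule between_of_deriv_const_sign) (use x in auto)
  then show ?thesis
    by (simp add: F_def)
qed

lemma periodic_linear_ode_pos:
  fixes k a :: "real \<Rightarrow> real"
  assumes a: "continuous_on {0..1} a"
    and k: "\<And>x. x \<in> {0..1} \<Longrightarrow> (k has_real_derivative s - a x * k x) (at x within {0..1})"
    and per: "k 1 = k 0" and mean: "0 < integral {0..1} k" and x: "x \<in> {0..1}"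
  shows "0 < k x"
proof -
  have k0: "0 < k 0"
  proof (rule ccontr)
    assume "\<not> 0 < k 0"
    then have "max (k 0) (exp (integral {0..1} a) * k 0) \<le> 0"
      by (simp add: mult_le_0_iff)
    then have "exp (integral {0..y} a) * k y \<le> 0" if "y \<in> {0..1}" for y
      using integrating_factor_between[OF a k that, unfolded per] by linarith
    then have "k y \<le> 0" if "y \<in> {0..1}" for y
      using that by (simp add: mult_le_0_iff)
    moreover have "continuous_on {0..1} k"
      using k DERIV_continuous continuous_on_eq_continuous_within by blast
    ultimately have "integral {0..1} k \<le> 0 * (1 - 0)"
      by (intro integral_le_const_real integrable_continuous_interval) auto
    with mean show False
      by simp
  qed
  then have "0 < min (k 0) (exp (integral {0..1} a) * k 0)"
    by simp
  then have "0 < exp (integral {0..x} a) * k x"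
    using integrating_factor_between[OF a k x, unfolded per] by linarith
  then show ?thesis
    by (simp add: zero_less_mult_iff)
qed

lemma periodic_linear_ode_harnack:
  fixes k a :: "real \<Rightarrow> real"
  assumes a: "continuous_on {0..1} a"
    and k: "\<And>x. x \<in> {0..1} \<Longrightarrow> (k has_real_derivative s - a x * k x) (at x within {0..1})"
    and per: "k 1 = k 0" and k0: "0 < k 0"
    and A1: "\<bar>integral {0..1} a\<bar> \<le> \<alpha>" and A: "\<And>x. x \<in> {0..1} \<Longrightarrow> \<bar>integral {0..x} a\<bar> \<le> \<beta>"
    and x: "x \<in> {0..1}"
  shows "k 0 * exp (- (\<alpha> + \<beta>)) \<le> k x \<and> k x \<le> k 0 * exp (\<alpha> + \<beta>)"
proof -
  define F where "F = exp (integral {0..x} a) * k x"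
  have k_eq: "k x = F * exp (- integral {0..x} a)"
    by (simp add: F_def exp_minus)
  have F: "min (k 0) (exp (integral {0..1} a) * k 0) \<le> F \<and> F \<le> max (k 0) (exp (integral {0..1} a) * k 0)"
    using integrating_factor_between[OF a k x] per by (simp add: F_def)
  have "k 0 * exp (- \<alpha>) \<le> min (k 0) (exp (integral {0..1} a) * k 0)"
    using A1 k0 by (auto simp: mult.commute)
  then have F_lo: "k 0 * exp (- \<alpha>) \<le> F"
    using F by linarith
  have F_pos: "0 \<le> F"
    using F_lo k0 by (smt (verit) exp_gt_zero mult_pos_pos)
  have "max (k 0) (exp (integral {0..1} a) * k 0) \<le> k 0 * exp \<alpha>"
    using A1 k0 by (auto simp: mult.commute)
  then have F_hi: "F \<le> k 0 * exp \<alpha>"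
    using F by linarith
  have "k 0 * exp (- (\<alpha> + \<beta>)) = (k 0 * exp (- \<alpha>)) * exp (- \<beta>)"
    by (simp add: exp_add[symmetric])
  also have "\<dots> \<le> F * exp (- integral {0..x} a)"
    using F_lo F_pos A[OF x] by (intro mult_mono) auto
  finally have lo: "k 0 * exp (- (\<alpha> + \<beta>)) \<le> k x"
    using k_eq by simp
  have "k x \<le> (k 0 * exp \<alpha>) * exp \<beta>"
    unfolding k_eq using F_hi F_pos A[OF x] k0 by (intro mult_mono) auto
  also have "\<dots> = k 0 * exp (\<alpha> + \<beta>)"
    by (simp add: exp_add)
  finally show ?thesis
    using lo by simp
qed

lemma periodic_linear_ode_bounds_by_mean:
  fixes k a :: "real \<Rightarrow> real"
  assumes a: "continuous_on {0..1} a"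
    and k: "\<And>x. x \<in> {0..1} \<Longrightarrow> (k has_real_derivative s - a x * k x) (at x within {0..1})"
    and per: "k 1 = k 0" and mean: "integral {0..1} k = c" "0 < c"
    and bound: "\<And>x. x \<in> {0..1} \<Longrightarrow> \<bar>a x\<bar> \<le> K"
  shows "c * exp (- 2 * K) \<le> k 0" and "\<And>x. x \<in> {0..1} \<Longrightarrow> k x \<le> c * exp (4 * K)"
proof -
  have k0: "0 < k 0"
    using periodic_linear_ode_pos[OF a k per] mean by simp
  have A: "\<bar>integral {0..x} a\<bar> \<le> K" if "x \<in> {0..1}" for x
    using abs_integral_upto_le[OF a bound that] .
  have KK: "K + K = 2 * K"
    by simp
  have harnack: "k 0 * exp (- 2 * K) \<le> k x \<and> k x \<le> k 0 * exp (2 * K)" if "x \<in> {0..1}" for x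
    using periodic_linear_ode_harnack[OF a k per k0 A A that] unfolding KK by simp
  have "continuous_on {0..1} k"
    using k DERIV_continuous continuous_on_eq_continuous_within by blast
  then have int_k: "k integrable_on {0..1}"
    by (rule integrable_continuous_interval)
  have "k 0 * exp (- 2 * K) * (1 - 0) \<le> c"
    unfolding mean(1)[symmetric] by (rule integral_ge_const_real) (use int_k harnack in auto)
  then have "k 0 * exp (- 2 * K) * exp (2 * K) \<le> c * exp (2 * K)"
    by simp
  then have k0_le: "k 0 \<le> c * exp (2 * K)"
    by (simp add: mult.assoc flip: exp_add)
  have "c \<le> k 0 * exp (2 * K) * (1 - 0)"
    unfolding mean(1)[symmetric] by (rule integral_le_const_real) (use int_k harnack in auto)
  then have "c * exp (- 2 * K) \<le> k 0 * exp (2 * K) * exp (- 2 * K)"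
    by simp
  then show "c * exp (- 2 * K) \<le> k 0"
    by (simp add: mult.assoc flip: exp_add)
  show "k x \<le> c * exp (4 * K)" if "x \<in> {0..1}" for x
  proof -
    have "k x \<le> k 0 * exp (2 * K)"
      using harnack[OF that] by simp
    also have "\<dots> \<le> c * exp (2 * K) * exp (2 * K)"
      using k0_le by simp
    finally show ?thesis
      by (simp add: mult.assoc flip: exp_add)
  qed
qed

lemma periodic_linear_ode_pinched:
  fixes k a \<phi> :: "real \<Rightarrow> real"
  assumes a: "continuous_on {0..1} a"
    and k: "\<And>x. x \<in> {0..1} \<Longrightarrow> (k has_real_derivative s - a x * k x) (at x within {0..1})"
    and per: "k 1 = k 0" and k0: "0 < k 0"
    and \<phi>: "continuous_on {0..1} \<phi>" "integral {0..1} \<phi> = 0" "\<And>x. x \<in> {0..1} \<Longrightarrow> \<bar>\<phi> x\<bar> \<le> K"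
    and close: "\<And>x. x \<in> {0..1} \<Longrightarrow> \<bar>a x - \<phi> x\<bar> \<le> \<delta>"
    and x: "x \<in> {0..1}"
  shows "k 0 * exp (- K - 2 * \<delta>) \<le> k x \<and> k x \<le> k 0 * exp (K + 2 * \<delta>)"
proof -
  have diff_cont: "continuous_on {0..1} (\<lambda>t. a t - \<phi> t)"
    using a \<phi>(1) by (intro continuous_intros)
  have split: "integral {0..y} a = integral {0..y} \<phi> + integral {0..y} (\<lambda>t. a t - \<phi> t)"
    if "y \<in> {0..1}" for y
  proof -
    have sub: "{0..y} \<subseteq> {0..1}"
      using that by auto
    have "a integrable_on {0..y}" "\<phi> integrable_on {0..y}"
      using continuous_on_subset[OF a sub] continuous_on_subset[OF \<phi>(1) sub]
      by (simp_all add: integrable_continuous_interval)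
    then show ?thesis
      by (simp add: integral_diff)
  qed
  have A1: "\<bar>integral {0..1} a\<bar> \<le> \<delta>"
    using split[of 1] abs_integral_upto_le[OF diff_cont close, of 1] \<phi>(2) by simp
  have A: "\<bar>integral {0..y} a\<bar> \<le> K + \<delta>" if "y \<in> {0..1}" for y
    using split[OF that] abs_integral_upto_le[OF \<phi>(1,3) that] abs_integral_upto_le[OF diff_cont close that]
    by linarith
  have "- (\<delta> + (K + \<delta>)) = - K - 2 * \<delta>" "\<delta> + (K + \<delta>) = K + 2 * \<delta>"
    by simp_all
  with periodic_linear_ode_harnack[OF a k per k0 A1 A x] show ?thesis
    by metis
qed

section \<open>Correctors\<close>

lemma correctorE:
  assumes "corrector G V \<theta> g"
  obtains g' H where "\<And>x. (g has_real_derivative g' x) (at x)" "\<And>x. g' x + G (g x) + V x = H"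
    "periodic1 g" "integral {0..1} g = \<theta>"
  using assms unfolding corrector_def by blast

lemma corrector_continuous: "corrector G V \<theta> g \<Longrightarrow> continuous_on S g"
  by (elim correctorE) (meson DERIV_isCont continuous_at_imp_continuous_on)

lemma corrector_mean: "corrector G V \<theta> g \<Longrightarrow> integral {0..1} g = \<theta>"
  by (simp add: corrector_def)

lemma corrector_periodic: "corrector G V \<theta> g \<Longrightarrow> g 1 = g 0"
  by (simp add: corrector_def periodic1_one)

lemma corrector_gap_linear_ode:
  assumes G: "\<And>x. (G has_real_derivative G' x) (at x)"
    and f: "corrector G V \<theta> f" and g: "corrector G V \<theta>' g"
  obtains s where "\<And>x. ((\<lambda>x. \<sigma> * (g x - f x)) has_real_derivative
    s - secant_slope G G' (g x) (f x) * (\<sigma> * (g x - f x))) (at x within S)"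
proof -
  obtain f' Hf where f': "\<And>x. (f has_real_derivative f' x) (at x)" "\<And>x. f' x + G (f x) + V x = Hf"
    by (rule correctorE[OF f]) blast
  obtain g' Hg where g': "\<And>x. (g has_real_derivative g' x) (at x)" "\<And>x. g' x + G (g x) + V x = Hg"
    by (rule correctorE[OF g]) blast
  have deriv: "((\<lambda>x. \<sigma> * (g x - f x)) has_real_derivative
      \<sigma> * (Hg - Hf) - secant_slope G G' (g x) (f x) * (\<sigma> * (g x - f x))) (at x)" for x
  proof -
    have eq: "g' x - f' x = Hg - Hf - secant_slope G G' (g x) (f x) * (g x - f x)"
      using f'(2)[of x] g'(2)[of x] secant_slope_mult[of G G' "g x" "f x"] by (simp add: algebra_simps)
    show ?thesis
      by (rule DERIV_cong[OF DERIV_cmult[OF DERIV_diff[OF g'(1) f'(1)]]])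
        (simp only: eq, simp add: algebra_simps)
  qed
  show thesis
    by (rule that, rule has_field_derivative_at_within, rule deriv)
qed

lemma continuous_on_secant_slope_correctors:
  assumes G: "\<And>x. (G has_real_derivative G' x) (at x)" and G': "continuous_on UNIV G'"
    and f: "corrector G V \<theta> f" and g: "corrector G V \<theta>' g"
  shows "continuous_on S (\<lambda>x. secant_slope G G' (g x) (f x))"
  using G' corrector_continuous[OF f, of UNIV] corrector_continuous[OF g, of UNIV]
  by (intro continuous_at_imp_continuous_on ballI isCont_secant_slope[OF G])
    (simp_all add: continuous_on_eq_continuous_at)

lemma corrector_less:
  assumes G: "\<And>x. (G has_real_derivative G' x) (at x)" and G': "continuous_on UNIV G'"
    and f: "corrector G V \<theta> f" and g: "corrector G V \<theta>' g" and less: "\<theta> < \<theta>'"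
    and x: "x \<in> {0..1}"
  shows "f x < g x"
proof -
  obtain s where k: "\<And>x. ((\<lambda>x. 1 * (g x - f x)) has_real_derivative
      s - secant_slope G G' (g x) (f x) * (1 * (g x - f x))) (at x within {0..1})"
    using corrector_gap_linear_ode[OF G f g] by blast
  have "integral {0..1} (\<lambda>x. 1 * (g x - f x)) = \<theta>' - \<theta>"
    using corrector_continuous[OF f] corrector_continuous[OF g] corrector_mean[OF f] corrector_mean[OF g]
    by (simp add: integral_diff integrable_continuous_interval)
  then have "0 < 1 * (g x - f x)"
    using less corrector_periodic[OF f] corrector_periodic[OF g]
    by (intro periodic_linear_ode_pos[OF continuous_on_secant_slope_correctors[OF G G' f g] k _ _ x])
      simp_all
  then show ?thesis
    by simp
qed

lemma periodic_solution_bounded: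
  fixes G V :: "real \<Rightarrow> real"
  assumes coercive: "filterlim G at_top at_top" "filterlim G at_top at_bot"
    and V: "continuous_on {0..1} V"
  obtains R1 R2 where "\<And>g g' H x. periodic1 g \<Longrightarrow> (\<And>x. (g has_real_derivative g' x) (at x)) \<Longrightarrow>
    (\<And>x. g' x + G (g x) + V x = H) \<Longrightarrow> \<bar>H\<bar> \<le> C \<Longrightarrow> R1 \<le> g x \<and> g x \<le> R2"
proof -
  obtain BV where BV: "\<And>x. x \<in> {0..1} \<Longrightarrow> \<bar>V x\<bar> \<le> BV"
    using continuous_on_abs_bound[OF V] by blast
  have "\<forall>\<^sub>F p in at_top. C + BV < G p" "\<forall>\<^sub>F p in at_bot. C + BV < G p"
    using coercive by (simp_all add: filterlim_at_top_dense)
  then obtain R1 R2 where R1: "\<And>p. p \<le> R1 \<Longrightarrow> C + BV < G p" and R2: "\<And>p. R2 \<le> p \<Longrightarrow> C + BV < G p"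
    unfolding eventually_at_top_linorder eventually_at_bot_linorder by blast
  have "R1 \<le> g x \<and> g x \<le> R2"
    if per: "periodic1 g" and g: "\<And>x. (g has_real_derivative g' x) (at x)"
      and ode: "\<And>x. g' x + G (g x) + V x = H" and H: "\<bar>H\<bar> \<le> C" for g g' H x
  proof -
    obtain xmax xmin where x: "xmax \<in> {0..1}" "xmin \<in> {0..1}"
      and ext: "\<And>y. g xmin \<le> g y \<and> g y \<le> g xmax" and crit: "g' xmax = 0" "g' xmin = 0"
      using periodic1_attains_extrema[OF per g] by blast
    have "G (g xmax) \<le> C + BV" "G (g xmin) \<le> C + BV"
      using ode[of xmax] ode[of xmin] crit H BV[OF x(1)] BV[OF x(2)] by auto
    then have "g xmax < R2" "R1 < g xmin"
      using R1[of "g xmin"] R2[of "g xmax"] by (auto simp: not_le[symmetric])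
    with ext[of x] show ?thesis
      by linarith
  qed
  then show thesis
    using that by blast
qed

lemma corrector_bounded:
  fixes G V :: "real \<Rightarrow> real"
  assumes G: "continuous_on UNIV G"
    and coercive: "filterlim G at_top at_top" "filterlim G at_top at_bot"
    and V: "continuous_on {0..1} V"
  obtains R1 R2 where "\<And>\<theta> g x. corrector G V \<theta> g \<Longrightarrow> \<theta> \<in> {lo..hi} \<Longrightarrow>
    (\<forall>y\<in>{0..1}. lo \<le> g y) \<or> (\<forall>y\<in>{0..1}. g y \<le> hi) \<Longrightarrow> R1 \<le> g x \<and> g x \<le> R2"
proof -
  obtain BV where BV: "\<And>x. x \<in> {0..1} \<Longrightarrow> \<bar>V x\<bar> \<le> BV"
    using continuous_on_abs_bound[OF V] by blast
  obtain BG where BG: "\<And>p. p \<in> {lo..hi} \<Longrightarrow> \<bar>G p\<bar> \<le> BG"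
    using continuous_on_abs_bound[OF continuous_on_subset[OF G subset_UNIV]] by blast
  obtain R1 R2 where R: "\<And>g g' H x. periodic1 g \<Longrightarrow> (\<And>x. (g has_real_derivative g' x) (at x)) \<Longrightarrow>
    (\<And>x. g' x + G (g x) + V x = H) \<Longrightarrow> \<bar>H\<bar> \<le> BG + BV \<Longrightarrow> R1 \<le> g x \<and> g x \<le> R2"
    using periodic_solution_bounded[OF coercive V] by blast
  have "R1 \<le> g x \<and> g x \<le> R2"
    if g: "corrector G V \<theta> g" and \<theta>: "\<theta> \<in> {lo..hi}"
      and side: "(\<forall>y\<in>{0..1}. lo \<le> g y) \<or> (\<forall>y\<in>{0..1}. g y \<le> hi)" for \<theta> g x
  proof -
    obtain g' H where g': "\<And>x. (g has_real_derivative g' x) (at x)" and ode: "\<And>x. g' x + G (g x) + V x = H"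
      and per: "periodic1 g" and mean: "integral {0..1} g = \<theta>"
      by (rule correctorE[OF g]) blast
    obtain xmax xmin where x: "xmax \<in> {0..1}" "xmin \<in> {0..1}"
      and ext: "\<And>y. g xmin \<le> g y \<and> g y \<le> g xmax" and crit: "g' xmax = 0" "g' xmin = 0"
      using periodic1_attains_extrema[OF per g'] by blast
    have int_g: "g integrable_on {0..1}"
      using corrector_continuous[OF g] by (rule integrable_continuous_interval)
    have "g xmin * (1 - 0) \<le> \<theta>"
      unfolding mean[symmetric] by (rule integral_ge_const_real) (use ext int_g in auto)
    moreover have "\<theta> \<le> g xmax * (1 - 0)"
      unfolding mean[symmetric] by (rule integral_le_const_real) (use ext int_g in auto)
    ultimately have "\<exists>y\<in>{0..1}. g' y = 0 \<and> g y \<in> {lo..hi}"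
      using side x crit \<theta> by auto
    then have "\<bar>H\<bar> \<le> BG + BV"
      using ode BG BV by (metis abs_triangle_ineq add_0 add_mono order_trans)
    then show ?thesis
      using R[OF per g' ode] by blast
  qed
  then show thesis
    using that by blast
qed

section \<open>Perturbation of a two-phase profile\<close>

lemma integral_two_phase_bound:
  fixes h k :: "real \<Rightarrow> real"
  assumes hk: "continuous_on {0..1} (\<lambda>x. h x * k x)"
    and ell: "0 < ell" "ell < L" "ell < 1 - L"
    and h_low: "\<And>x. x \<in> {0..L - ell} \<Longrightarrow> h x = h1"
    and h_high: "\<And>x. x \<in> {L..1 - ell} \<Longrightarrow> h x = h2"
    and h12: "h1 \<le> 0" "h2 \<le> 0" and h: "\<And>x. x \<in> {0..1} \<Longrightarrow> \<bar>h x\<bar> \<le> K"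
    and k: "\<And>x. x \<in> {0..1} \<Longrightarrow> m \<le> k x \<and> k x \<le> M" and m: "0 \<le> m"
  shows "integral {0..1} (\<lambda>x. h x * k x) \<le> ((L - ell) * h1 + (1 - L - ell) * h2) * m + 2 * ell * K * M"
proof -
  define \<psi> where "\<psi> = (\<lambda>x. h x * k x)"
  have int: "\<psi> integrable_on {a..b}" if "0 \<le> a" "b \<le> 1" for a b
    using continuous_on_subset[OF hk, of "{a..b}"] that
    by (auto simp: \<psi>_def intro: integrable_continuous_interval)
  have low: "\<psi> x \<le> h1 * m" if "x \<in> {0..L - ell}" for x
    using h_low[OF that] k[of x] that ell h12 by (simp add: \<psi>_def mult_left_mono_neg)
  have high: "\<psi> x \<le> h2 * m" if "x \<in> {L..1 - ell}" for x
    using h_high[OF that] k[of x] that ell h12 by (simp add: \<psi>_def mult_left_mono_neg)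
  have trans: "\<psi> x \<le> K * M" if "x \<in> {0..1}" for x
  proof -
    have "\<psi> x \<le> \<bar>h x\<bar> * k x"
      using k[OF that] m by (simp add: \<psi>_def mult_right_mono)
    also have "\<dots> \<le> K * M"
      using h[OF that] k[OF that] m by (intro mult_mono) auto
    finally show ?thesis .
  qed
  have "integral {0..1} \<psi> = integral {0..L - ell} \<psi> + integral {L - ell..L} \<psi>
      + integral {L..1 - ell} \<psi> + integral {1 - ell..1} \<psi>"
    using ell int
      Henstock_Kurzweil_Integration.integral_combine[where a = 0 and c = "L - ell" and b = 1 and f = \<psi>]
      Henstock_Kurzweil_Integration.integral_combine[where a = "L - ell" and c = L and b = 1 and f = \<psi>]
      Henstock_Kurzweil_Integration.integral_combine[where a = L and c = "1 - ell" and b = 1 and f = \<psi>]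
    by simp
  also have "\<dots> \<le> h1 * m * (L - ell - 0) + K * M * (L - (L - ell))
      + h2 * m * (1 - ell - L) + K * M * (1 - (1 - ell))"
    using ell int low high trans
    by (intro add_mono integral_le_const_real) auto
  finally show ?thesis
    by (simp add: \<psi>_def algebra_simps)
qed

locale two_phase_profile =
  fixes G G' G'' V f :: "real \<Rightarrow> real" and p1 p2 L ell K1 K2 :: real
  assumes G_deriv: "\<And>x. (G has_real_derivative G' x) (at x)"
    and G'_deriv: "\<And>x. (G' has_real_derivative G'' x) (at x)"
    and G''_cont: "continuous_on UNIV G''"
    and coercive: "filterlim G at_top at_top" "filterlim G at_top at_bot"
    and V_cont: "continuous_on UNIV V"
    and f_corrector: "corrector G V (integral {0..1} f) f"
    and f_range: "\<And>x. p1 \<le> f x \<and> f x \<le> p2"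
    and f_low: "\<And>x. x \<in> {0..L - ell} \<Longrightarrow> f x = p1"
    and f_high: "\<And>x. x \<in> {L..1 - ell} \<Longrightarrow> f x = p2"
    and f_mean_slope: "integral {0..1} (\<lambda>x. G' (f x)) = 0"
    and K1: "\<And>x. \<bar>G' (f x)\<bar> \<le> K1" and K2: "\<And>x. \<bar>G'' (f x)\<bar> \<le> K2"
    and G''_nonpos: "G'' p1 \<le> 0" "G'' p2 \<le> 0"
    and ell: "0 < ell" "ell < L" "ell < 1 - L"
begin

text \<open>If a positive gap k stays within the factors exp (-K1 - 2 \<delta>) and exp (K1 + 2 \<delta>) of its
  value \<kappa>, then \<kappa> * second_variation_bound \<delta> bounds the integral of (G'' o f) k.\<close>

definition second_variation_bound :: "real \<Rightarrow> real" where
  "second_variation_bound \<delta> = ((L - ell) * G'' p1 + (1 - L - ell) * G'' p2) * exp (- K1 - 2 * \<delta>)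
    + 2 * ell * K2 * exp (K1 + 2 * \<delta>)"

lemma G'_cont: "continuous_on UNIV G'"
  using G'_deriv by (meson DERIV_isCont continuous_at_imp_continuous_on)

lemma integral_signed_gap:
  assumes \<sigma>: "\<sigma> = 1 \<or> \<sigma> = -1" and g: "corrector G V (integral {0..1} f + \<sigma> * c) g"
  shows "integral {0..1} (\<lambda>x. \<sigma> * (g x - f x)) = c"
proof -
  have "integral {0..1} (\<lambda>x. \<sigma> * (g x - f x)) = \<sigma> * (integral {0..1} g - integral {0..1} f)"
    using corrector_continuous[OF f_corrector] corrector_continuous[OF g]
    by (simp add: integral_diff integrable_continuous_interval)
  also have "integral {0..1} g = integral {0..1} f + \<sigma> * c"
    by (rule corrector_mean[OF g])
  finally show ?thesis
    using \<sigma> by auto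
qed

lemma gap_bounds:
  assumes \<sigma>: "\<sigma> = 1 \<or> \<sigma> = -1" and g: "corrector G V (integral {0..1} f + \<sigma> * c) g" and c: "0 < c"
    and range: "\<And>x. x \<in> {0..1} \<Longrightarrow> g x \<in> {R1..R2} \<and> f x \<in> {R1..R2}"
    and Ka: "\<And>p. p \<in> {R1..R2} \<Longrightarrow> \<bar>G' p\<bar> \<le> Ka" and Kp: "\<And>p. p \<in> {R1..R2} \<Longrightarrow> \<bar>G'' p\<bar> \<le> Kp"
  obtains \<kappa> where "c * exp (- 2 * Ka) \<le> \<kappa>"
    and "\<And>x. x \<in> {0..1} \<Longrightarrow> 0 < \<sigma> * (g x - f x) \<and> \<sigma> * (g x - f x) \<le> c * exp (4 * Ka)"
    and "\<And>x. x \<in> {0..1} \<Longrightarrow> \<kappa> * exp (- K1 - 2 * (Kp * c * exp (4 * Ka))) \<le> \<sigma> * (g x - f x) \<and>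
      \<sigma> * (g x - f x) \<le> \<kappa> * exp (K1 + 2 * (Kp * c * exp (4 * Ka)))"
proof -
  define a where "a x = secant_slope G G' (g x) (f x)" for x
  define k where "k x = \<sigma> * (g x - f x)" for x
  obtain s where k_deriv: "\<And>x. (k has_real_derivative s - a x * k x) (at x within {0..1})"
    unfolding k_def a_def using corrector_gap_linear_ode[OF G_deriv f_corrector g] by blast
  have a_cont: "continuous_on {0..1} a"
    unfolding a_def by (rule continuous_on_secant_slope_correctors[OF G_deriv G'_cont f_corrector g])
  have k_per: "k 1 = k 0"
    using corrector_periodic[OF f_corrector] corrector_periodic[OF g] by (simp add: k_def)
  have k_mean: "integral {0..1} k = c"
    unfolding k_def by (rule integral_signed_gap[OF \<sigma> g])
  have a_bound: "\<bar>a x\<bar> \<le> Ka" if "x \<in> {0..1}" for x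
    unfolding a_def using range[OF that] by (intro abs_secant_slope_le[OF G_deriv _ _ Ka]) auto
  have k0: "c * exp (- 2 * Ka) \<le> k 0" and k_small: "\<And>x. x \<in> {0..1} \<Longrightarrow> k x \<le> c * exp (4 * Ka)"
    using periodic_linear_ode_bounds_by_mean[OF a_cont k_deriv k_per k_mean c a_bound] by blast+
  have k_pos: "0 < k x" if "x \<in> {0..1}" for x
    using periodic_linear_ode_pos[OF a_cont k_deriv k_per _ that] k_mean c by simp
  have a_close: "\<bar>a x - G' (f x)\<bar> \<le> Kp * c * exp (4 * Ka)" if x: "x \<in> {0..1}" for x
  proof -
    have "\<bar>a x - G' (f x)\<bar> \<le> Kp * \<bar>g x - f x\<bar>"
      unfolding a_def using range[OF x] by (intro abs_secant_slope_minus_deriv_le[OF G_deriv G'_deriv _ _ Kp]) auto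
    also have "\<bar>g x - f x\<bar> = k x"
      using k_pos[OF x] \<sigma> by (auto simp: k_def)
    also have "Kp * k x \<le> Kp * (c * exp (4 * Ka))"
      using k_small[OF x] Kp[of "f x"] range[OF x] by (intro mult_left_mono) auto
    finally show ?thesis
      by (simp add: mult.assoc)
  qed
  have G'f_cont: "continuous_on {0..1} (\<lambda>x. G' (f x))"
    using continuous_on_compose2[OF G'_cont corrector_continuous[OF f_corrector]] by auto
  have "k 0 * exp (- K1 - 2 * (Kp * c * exp (4 * Ka))) \<le> k x \<and> k x \<le> k 0 * exp (K1 + 2 * (Kp * c * exp (4 * Ka)))"
    if "x \<in> {0..1}" for x
    using periodic_linear_ode_pinched[OF a_cont k_deriv k_per k_pos G'f_cont f_mean_slope K1 a_close that]
      by simp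
  with k0 k_pos k_small show thesis
    by (intro that[of "k 0"]) (auto simp: k_def)
qed


lemma mean_slope_le_second_variation:
  assumes \<sigma>: "\<sigma> = 1 \<or> \<sigma> = -1" and g: "corrector G V (integral {0..1} f + \<sigma> * c) g"
    and sign: "\<And>x. x \<in> {0..1} \<Longrightarrow> \<sigma> * (g x - f x) = \<bar>g x - f x\<bar>"
    and near: "\<And>x p. x \<in> {0..1} \<Longrightarrow> min (g x) (f x) \<le> p \<Longrightarrow> p \<le> max (g x) (f x) \<Longrightarrow>
      G'' p \<le> G'' (f x) + \<epsilon>"
  shows "\<sigma> * integral {0..1} (\<lambda>x. G' (g x))
    \<le> integral {0..1} (\<lambda>x. G'' (f x) * (\<sigma> * (g x - f x))) + \<epsilon> * c"
proof -
  define k where "k x = \<sigma> * (g x - f x)" for x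
  have g_cont: "continuous_on UNIV g" and f_cont: "continuous_on UNIV f"
    using corrector_continuous[OF g] corrector_continuous[OF f_corrector] .
  have "continuous_on UNIV (\<lambda>x. G' (g x))" "continuous_on UNIV (\<lambda>x. G' (f x))"
    "continuous_on UNIV (\<lambda>x. G'' (f x) * k x)" "continuous_on UNIV (\<lambda>x. \<epsilon> * k x)"
    "continuous_on UNIV (\<lambda>x. \<sigma> * (G' (g x) - G' (f x)))"
    using continuous_on_compose2[OF G'_cont g_cont] continuous_on_compose2[OF G'_cont f_cont]
      continuous_on_compose2[OF G''_cont f_cont] g_cont f_cont
    by (auto simp: k_def intro!: continuous_intros)
  then have int: "(\<lambda>x. G' (g x)) integrable_on {0..1}" "(\<lambda>x. G' (f x)) integrable_on {0..1}"
    "(\<lambda>x. G'' (f x) * k x) integrable_on {0..1}" "(\<lambda>x. \<epsilon> * k x) integrable_on {0..1}"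
    "(\<lambda>x. \<sigma> * (G' (g x) - G' (f x))) integrable_on {0..1}"
    by (auto intro: integrable_continuous_interval continuous_on_subset)
  have pointwise: "\<sigma> * (G' (g x) - G' (f x)) \<le> G'' (f x) * k x + \<epsilon> * k x" if x: "x \<in> {0..1}" for x
    using deriv_increment_le[OF G'_deriv near[OF x] sign[OF x]] sign[OF x]
    by (simp add: k_def algebra_simps)
  have "\<sigma> * integral {0..1} (\<lambda>x. G' (g x)) = integral {0..1} (\<lambda>x. \<sigma> * (G' (g x) - G' (f x)))"
    using int f_mean_slope by (simp add: integral_diff)
  also have "\<dots> \<le> integral {0..1} (\<lambda>x. G'' (f x) * k x + \<epsilon> * k x)"
    using int pointwise by (intro integral_le integrable_add) auto
  also have "\<dots> = integral {0..1} (\<lambda>x. G'' (f x) * k x) + \<epsilon> * c"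
    using int integral_signed_gap[OF \<sigma> g] by (simp add: integral_add k_def[abs_def])
  finally show ?thesis
    unfolding k_def .
qed

lemma mean_slope_estimate:
  assumes \<sigma>: "\<sigma> = 1 \<or> \<sigma> = -1" and g: "corrector G V (integral {0..1} f + \<sigma> * c) g" and c: "0 < c"
    and range: "\<And>x. x \<in> {0..1} \<Longrightarrow> g x \<in> {R1..R2} \<and> f x \<in> {R1..R2}"
    and Ka: "\<And>p. p \<in> {R1..R2} \<Longrightarrow> \<bar>G' p\<bar> \<le> Ka" and Kp: "\<And>p. p \<in> {R1..R2} \<Longrightarrow> \<bar>G'' p\<bar> \<le> Kp"
    and uc: "\<And>p q. p \<in> {R1..R2} \<Longrightarrow> q \<in> {R1..R2} \<Longrightarrow> \<bar>p - q\<bar> \<le> c * exp (4 * Ka) \<Longrightarrow>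
      \<bar>G'' p - G'' q\<bar> \<le> \<epsilon>"
  obtains \<kappa> where "c * exp (- 2 * Ka) \<le> \<kappa>"
    and "\<sigma> * integral {0..1} (\<lambda>x. G' (g x))
      \<le> \<kappa> * second_variation_bound (Kp * c * exp (4 * Ka)) + \<epsilon> * c"
proof -
  define \<delta> where "\<delta> = Kp * c * exp (4 * Ka)"
  define k where "k x = \<sigma> * (g x - f x)" for x
  obtain \<kappa> where \<kappa>: "c * exp (- 2 * Ka) \<le> \<kappa>"
    and k_small: "\<And>x. x \<in> {0..1} \<Longrightarrow> 0 < k x \<and> k x \<le> c * exp (4 * Ka)"
    and k_near: "\<And>x. x \<in> {0..1} \<Longrightarrow> \<kappa> * exp (- K1 - 2 * \<delta>) \<le> k x \<and> k x \<le> \<kappa> * exp (K1 + 2 * \<delta>)"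
    using gap_bounds[OF \<sigma> g c range Ka Kp] unfolding k_def \<delta>_def by blast
  have sign: "\<sigma> * (g x - f x) = \<bar>g x - f x\<bar>" if "x \<in> {0..1}" for x
    using k_small[OF that] \<sigma> by (auto simp: k_def)
  have near: "G'' p \<le> G'' (f x) + \<epsilon>"
    if x: "x \<in> {0..1}" and p: "min (g x) (f x) \<le> p" "p \<le> max (g x) (f x)" for x p
  proof -
    have "\<bar>p - f x\<bar> \<le> c * exp (4 * Ka)" "p \<in> {R1..R2}"
      using p sign[OF x] k_small[OF x] range[OF x] by (auto simp: k_def)
    then show ?thesis
      using uc[of p "f x"] range[OF x] by auto
  qed
  have "continuous_on {0..1} (\<lambda>x. G'' (f x) * k x)"
    using continuous_on_compose2[OF G''_cont corrector_continuous[OF f_corrector]]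
      corrector_continuous[OF f_corrector] corrector_continuous[OF g]
    by (auto simp: k_def intro!: continuous_intros)
  then have "integral {0..1} (\<lambda>x. G'' (f x) * k x)
      \<le> ((L - ell) * G'' p1 + (1 - L - ell) * G'' p2) * (\<kappa> * exp (- K1 - 2 * \<delta>))
        + 2 * ell * K2 * (\<kappa> * exp (K1 + 2 * \<delta>))"
  proof (rule integral_two_phase_bound)
    have "0 < c * exp (- 2 * Ka)"
      using c by simp
    with \<kappa> show "0 \<le> \<kappa> * exp (- K1 - 2 * \<delta>)"
      by simp
  qed (use ell f_low f_high G''_nonpos K2 k_near in auto)
  also have "\<dots> = \<kappa> * second_variation_bound \<delta>"
    by (simp add: second_variation_bound_def algebra_simps)
  finally show thesis
    using mean_slope_le_second_variation[OF \<sigma> g sign near] \<kappa>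
    by (intro that[of \<kappa>]) (simp_all add: k_def \<delta>_def)
qed

lemma correctors_near_profile_bounded:
  obtains R1 R2 where "R1 \<le> p1" "p2 \<le> R2"
    and "\<And>\<sigma> c g x. \<sigma> = 1 \<or> \<sigma> = -1 \<Longrightarrow> 0 < c \<Longrightarrow> c \<le> 1 \<Longrightarrow>
      corrector G V (integral {0..1} f + \<sigma> * c) g \<Longrightarrow> g x \<in> {R1..R2}"
proof -
  have G_cont: "continuous_on UNIV G"
    using G_deriv by (meson DERIV_isCont continuous_at_imp_continuous_on)
  obtain R1 R2 where R: "\<And>\<theta> g x. corrector G V \<theta> g \<Longrightarrow> \<theta> \<in> {p1 - 1..p2 + 1} \<Longrightarrow>
      (\<forall>y\<in>{0..1}. p1 - 1 \<le> g y) \<or> (\<forall>y\<in>{0..1}. g y \<le> p2 + 1) \<Longrightarrow> R1 \<le> g x \<and> g x \<le> R2"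
    using corrector_bounded[OF G_cont coercive continuous_on_subset[OF V_cont subset_UNIV]] by blast
  have int_f: "f integrable_on {0..1}"
    using corrector_continuous[OF f_corrector] by (rule integrable_continuous_interval)
  have "p1 * (1 - 0) \<le> integral {0..1} f"
    by (rule integral_ge_const_real) (use f_range int_f in auto)
  moreover have "integral {0..1} f \<le> p2 * (1 - 0)"
    by (rule integral_le_const_real) (use f_range int_f in auto)
  ultimately have mean: "integral {0..1} f + \<sigma> * c \<in> {p1 - 1..p2 + 1}"
    if "\<sigma> = 1 \<or> \<sigma> = -1" "0 < c" "c \<le> 1" for \<sigma> c
    using that by auto
  have side: "(\<forall>y\<in>{0..1}. p1 - 1 \<le> g y) \<or> (\<forall>y\<in>{0..1}. g y \<le> p2 + 1)"
    if \<sigma>: "\<sigma> = 1 \<or> \<sigma> = -1" and c: "0 < c" and g: "corrector G V (integral {0..1} f + \<sigma> * c) g"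
    for \<sigma> c g
    using \<sigma>
  proof
    assume "\<sigma> = 1"
    then have "p1 - 1 \<le> g y" if "y \<in> {0..1}" for y
      using corrector_less[OF G_deriv G'_cont f_corrector g _ that] c f_range[of y] by fastforce
    then show ?thesis
      by blast
  next
    assume "\<sigma> = -1"
    then have "g y \<le> p2 + 1" if "y \<in> {0..1}" for y
      using corrector_less[OF G_deriv G'_cont g f_corrector _ that] c f_range[of y] by fastforce
    then show ?thesis
      by blast
  qed
  show thesis
  proof (rule that[of "min R1 p1" "max R2 p2"])
    fix \<sigma> c g x
    assume \<sigma>: "\<sigma> = 1 \<or> \<sigma> = -1" and c: "0 < c" "c \<le> 1"
      and g: "corrector G V (integral {0..1} f + \<sigma> * c) g"
    have "R1 \<le> g x \<and> g x \<le> R2"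
      by (rule R[OF g mean[OF \<sigma> c] side[OF \<sigma> c(1) g]])
    then show "g x \<in> {min R1 p1..max R2 p2}"
      by auto
  qed simp_all
qed

lemma mean_slope_negative:
  assumes neg: "second_variation_bound 0 < 0"
    and \<sigma>: "\<sigma> = 1 \<or> \<sigma> = -1" and g: "corrector G V (integral {0..1} f + \<sigma> * c) g" and c: "0 < c"
    and range: "\<And>x. x \<in> {0..1} \<Longrightarrow> g x \<in> {R1..R2} \<and> f x \<in> {R1..R2}"
    and Ka: "\<And>p. p \<in> {R1..R2} \<Longrightarrow> \<bar>G' p\<bar> \<le> Ka" and Kp: "\<And>p. p \<in> {R1..R2} \<Longrightarrow> \<bar>G'' p\<bar> \<le> Kp"
    and uc: "\<And>p q. p \<in> {R1..R2} \<Longrightarrow> q \<in> {R1..R2} \<Longrightarrow> \<bar>p - q\<bar> \<le> c * exp (4 * Ka) \<Longrightarrow>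
      \<bar>G'' p - G'' q\<bar> \<le> - exp (- 2 * Ka) * second_variation_bound 0 / 4"
    and small: "second_variation_bound (Kp * c * exp (4 * Ka)) \<le> second_variation_bound 0 / 2"
  shows "\<sigma> * integral {0..1} (\<lambda>x. G' (g x)) < 0"
proof -
  obtain \<kappa> where \<kappa>: "c * exp (- 2 * Ka) \<le> \<kappa>" and estimate: "\<sigma> * integral {0..1} (\<lambda>x. G' (g x))
      \<le> \<kappa> * second_variation_bound (Kp * c * exp (4 * Ka)) + (- exp (- 2 * Ka) * second_variation_bound 0 / 4) * c"
    using mean_slope_estimate[OF \<sigma> g c range Ka Kp uc] by blast
  have "\<kappa> * second_variation_bound (Kp * c * exp (4 * Ka))
      \<le> c * exp (- 2 * Ka) * second_variation_bound (Kp * c * exp (4 * Ka))"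
    using \<kappa> small neg by (intro mult_right_mono_neg) auto
  also have "\<dots> \<le> c * exp (- 2 * Ka) * (second_variation_bound 0 / 2)"
    using small c by (intro mult_left_mono) auto
  finally have "\<sigma> * integral {0..1} (\<lambda>x. G' (g x)) \<le> c * exp (- 2 * Ka) * second_variation_bound 0 / 4"
    using estimate by (simp add: field_simps)
  also have "\<dots> < 0"
    using c neg by (simp add: mult_pos_neg)
  finally show ?thesis .
qed

lemma eventually_mean_slope_sign:
  assumes neg: "second_variation_bound 0 < 0"
  shows "\<forall>\<^sub>F c in at_right 0. \<forall>\<sigma>\<in>{1, -1}. \<forall>g. corrector G V (integral {0..1} f + \<sigma> * c) g \<longrightarrow>
    \<sigma> * integral {0..1} (\<lambda>x. G' (g x)) < 0"
proof -
  obtain R1 R2 where R: "R1 \<le> p1" "p2 \<le> R2" and g_range: "\<And>\<sigma> c g x. \<sigma> = 1 \<or> \<sigma> = -1 \<Longrightarrow> 0 < c \<Longrightarrow>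
      c \<le> 1 \<Longrightarrow> corrector G V (integral {0..1} f + \<sigma> * c) g \<Longrightarrow> g x \<in> {R1..R2}"
    using correctors_near_profile_bounded by blast
  obtain Ka where Ka: "\<And>p. p \<in> {R1..R2} \<Longrightarrow> \<bar>G' p\<bar> \<le> Ka"
    using continuous_on_abs_bound[OF continuous_on_subset[OF G'_cont subset_UNIV]] by blast
  obtain Kp where Kp: "\<And>p. p \<in> {R1..R2} \<Longrightarrow> \<bar>G'' p\<bar> \<le> Kp"
    using continuous_on_abs_bound[OF continuous_on_subset[OF G''_cont subset_UNIV]] by blast
  have "0 < - exp (- 2 * Ka) * second_variation_bound 0 / 4"
    using neg by (simp add: mult_pos_neg)
  moreover have "uniformly_continuous_on {R1..R2} G''"
    using compact_uniformly_continuous[OF continuous_on_subset[OF G''_cont subset_UNIV] compact_Icc] .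
  ultimately obtain \<eta> where "0 < \<eta>" and \<eta>: "\<And>p q. p \<in> {R1..R2} \<Longrightarrow> q \<in> {R1..R2} \<Longrightarrow> \<bar>p - q\<bar> < \<eta> \<Longrightarrow>
      \<bar>G'' p - G'' q\<bar> < - exp (- 2 * Ka) * second_variation_bound 0 / 4"
    unfolding uniformly_continuous_on_def dist_real_def by metis
  have "((\<lambda>c. second_variation_bound (Kp * c * exp (4 * Ka))) \<longlongrightarrow> second_variation_bound 0) (at_right 0)"
    unfolding second_variation_bound_def by (rule tendsto_eq_intros refl | simp)+
  then have "\<forall>\<^sub>F c in at_right 0. second_variation_bound (Kp * c * exp (4 * Ka)) < second_variation_bound 0 / 2"
    using neg by (intro order_tendstoD(2)) auto
  moreover have "((\<lambda>c. c * exp (4 * Ka)) \<longlongrightarrow> 0) (at_right 0)"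
    by (rule tendsto_eq_intros refl | simp)+
  then have "\<forall>\<^sub>F c in at_right 0. c * exp (4 * Ka) < \<eta>"
    using \<open>0 < \<eta>\<close> by (rule order_tendstoD(2))
  moreover have "\<forall>\<^sub>F c in at_right (0::real). c < 1"
    by (rule order_tendstoD(2)[OF tendsto_ident_at]) simp
  ultimately show ?thesis
    using eventually_at_right_less[of 0]
  proof eventually_elim
    case (elim c)
    show ?case
    proof (intro ballI allI impI)
      fix \<sigma> g
      assume "\<sigma> \<in> {1, -1}" and g: "corrector G V (integral {0..1} f + \<sigma> * c) g"
      then have \<sigma>: "\<sigma> = 1 \<or> \<sigma> = -1"
        by auto
      show "\<sigma> * integral {0..1} (\<lambda>x. G' (g x)) < 0"
      proof (rule mean_slope_negative[OF neg \<sigma> g _ _ Ka Kp])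
        show "g x \<in> {R1..R2} \<and> f x \<in> {R1..R2}" for x
          using g_range[OF \<sigma> _ _ g] f_range[of x] R elim by auto
        show "\<bar>G'' p - G'' q\<bar> \<le> - exp (- 2 * Ka) * second_variation_bound 0 / 4"
          if "p \<in> {R1..R2}" "q \<in> {R1..R2}" "\<bar>p - q\<bar> \<le> c * exp (4 * Ka)" for p q
          using \<eta>[OF that(1,2)] that(3) elim by fastforce
      qed (use elim in auto)
    qed
  qed
qed

end

theorem lemma5p3:
  fixes G G' G'' :: "real \<Rightarrow> real"
    and f f' V :: "real \<Rightarrow> real"
    and p1 p2 L K1 K2 ell \<theta>0 :: real
  assumes G_deriv: "\<And>x. (G has_real_derivative G' x) (at x)"
    and G'_deriv: "\<And>x. (G' has_real_derivative G'' x) (at x)"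
    and G''_cont: "continuous_on UNIV G''"
    and coercive: "filterlim G at_top at_top" "filterlim G at_top at_bot"
    and p12: "p1 < p2" "G' p1 < 0" "0 < G' p2"
    and L_def: "L = G' p2 / (G' p2 - G' p1)"
    and K1_def: "K1 = (SUP p\<in>{p1..p2}. \<bar>G' p\<bar>)"
    and K2_def: "K2 = (SUP p\<in>{p1..p2}. \<bar>G'' p\<bar>)"
    and f_per: "periodic1 f"
    and f_deriv: "\<And>x. (f has_real_derivative f' x) (at x)"
    and f'_cont: "continuous_on UNIV f'"
    and f'_lip: "\<exists>M. \<forall>x y. \<bar>f' x - f' y\<bar> \<le> M * \<bar>x - y\<bar>"
    and f_bounds: "\<And>x. p1 \<le> f x \<and> f x \<le> p2"
    and f_low: "\<And>x. x \<in> {0..L - ell} \<Longrightarrow> f x = p1"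
    and f_high: "\<And>x. x \<in> {L..1 - ell} \<Longrightarrow> f x = p2"
    and f_int: "integral {0..1} (\<lambda>x. G' (f x)) = 0"
    and V_def: "\<And>x. V x = - f' x - G (f x)"
    and \<theta>0_def: "\<theta>0 = integral {0..1} f"
    and G''_neg: "G'' p1 < 0" "G'' p2 < 0"
    and ell_range: "0 < ell" "ell < min L (1 - L)"
    and key: "((L - ell) * G'' p1 + (1 - L - ell) * G'' p2) * exp (- K1) + 2 * ell * K2 * exp K1 < 0"
  shows "\<exists>c0>0. \<forall>c. 0 < c \<and> c < c0 \<longrightarrow>
           (\<forall>g. corrector G V (\<theta>0 + c) g \<longrightarrow> integral {0..1} (\<lambda>x. G' (g x)) < 0) \<and>
           (\<forall>g. corrector G V (\<theta>0 - c) g \<longrightarrow> 0 < integral {0..1} (\<lambda>x. G' (g x)))"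
proof -
  have f_cont: "continuous_on UNIV f"
    using f_deriv by (meson DERIV_isCont continuous_at_imp_continuous_on)
  have G_cont: "continuous_on UNIV G" and G'_cont: "continuous_on UNIV G'"
    using G_deriv G'_deriv by (meson DERIV_isCont continuous_at_imp_continuous_on)+
  have "V = (\<lambda>x. - f' x - G (f x))"
    using V_def by auto
  then have V_cont: "continuous_on UNIV V"
    using f'_cont continuous_on_compose2[OF G_cont f_cont] by (auto intro!: continuous_intros)
  have f_corrector: "corrector G V \<theta>0 f"
    unfolding corrector_def using f_per \<theta>0_def f_deriv f'_cont V_def by (auto intro!: exI[of _ f'])
  have "bdd_above ((\<lambda>p. \<bar>G' p\<bar>) ` {p1..p2})" "bdd_above ((\<lambda>p. \<bar>G'' p\<bar>) ` {p1..p2})"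
    using G'_cont G''_cont
    by (auto intro!: bounded_imp_bdd_above compact_imp_bounded compact_continuous_image continuous_intros
        intro: continuous_on_subset)
  then have K: "\<bar>G' (f x)\<bar> \<le> K1" "\<bar>G'' (f x)\<bar> \<le> K2" for x
    unfolding K1_def K2_def using f_bounds by (auto intro!: cSUP_upper)
  interpret two_phase_profile G G' G'' V f p1 p2 L ell K1 K2
    using G_deriv G'_deriv G''_cont coercive V_cont f_corrector f_bounds f_low f_high f_int K
      G''_neg ell_range by unfold_locales (auto simp: \<theta>0_def)
  have "second_variation_bound 0 < 0"
    using key by (simp add: second_variation_bound_def)
  then obtain c0 where "0 < c0" and c0: "\<And>c. 0 < c \<Longrightarrow> c < c0 \<Longrightarrow> \<forall>\<sigma>\<in>{1, -1}. \<forall>g.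
      corrector G V (\<theta>0 + \<sigma> * c) g \<longrightarrow> \<sigma> * integral {0..1} (\<lambda>x. G' (g x)) < 0"
    using eventually_mean_slope_sign unfolding eventually_at_right_field \<theta>0_def by auto
  show ?thesis
    using c0 \<open>0 < c0\<close> by (intro exI[of _ c0]) auto
qed

end
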